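(* Let $\mathbf{X}\in\{0,1\}^{m\times n}$ and let $Q\subsetneq\mathrm{supp}(\mathbf{X})$ be nonempty. If the generalised binary matrix $\mathbf{X}^Q$ is minimally non-firm and $\mathbf{X}^P$ is firm for every $P\subsetneq Q$, then $\mathcal{S}^Q(\mathbf{X})\in\{0,1\}^{(m+|Q|)\times(n+|Q|)}$ is minimally non-firm.
   Context: A generalised binary matrix is a matrix with entries in $\{0,1,?\}$; a standard binary matrix has entries in $\{0,1\}$. For such $\mathbf{Y}$, $\mathrm{supp}(\mathbf{Y})=\{(i,j):y_{i,j}=1\}$. A submatrix indexed by $I\times J$ is obtained by deleting rows not in $I$ and columns not in $J$; it is proper if it omits at least one row or column. A rectangle of $\mathbf{Y}$ is a set $I\times J$ of positions containing no entry equal to $0$. An isolated set is a subset of $\mathrm{supp}(\mathbf{Y})$ no two distinct elements of which lie in a common rectangle; $i(\mathbf{Y})$ is the maximum size of an isolated set; $br(\mathbf{Y})$ is the minimum number of rectangles whose union contains $\mathrm{supp}(\mathbf{Y})$ ($?$ entries need not be covered). $\mathbf{Y}$ is firm if $i(\mathbf{Y}')=br(\mathbf{Y}')$ for every submatrix $\mathbf{Y}'$ including $\mathbf{Y}$; $\mathbf{Y}$ is minimally non-firm if $i(\mathbf{Y})<br(\mathbf{Y})$ and $i(\mathbf{Y}')=br(\mathbf{Y}')$ for every proper submatrix $\mathbf{Y}'$. For $\mathbf{X}\in\{0,1\}^{m\times n}$ and $P\subseteq\mathrm{supp}(\mathbf{X})$, $\mathbf{X}^P$ is the generalised binary matrix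 obtained from $\mathbf{X}$ by replacing every entry in $P$ by $?$ (so $\mathbf{X}^\emptyset=\mathbf{X}$). Stretching: for nonempty $Q=\{(\ell_1,k_1),\dots,(\ell_q,k_q)\}\subseteq\mathrm{supp}(\mathbf{X})$ listed in lexicographic order (row index, then column index), $\mathcal{S}^Q(\mathbf{X})$ is the $(m+q)\times(n+q)$ binary matrix whose top-left $m\times n$ block is $\mathbf{X}$, whose entries at $(\ell_t,n+t)$, $(m+t,k_t)$, $(m+t,n+t)$ equal $1$ for each $t\in[q]$, and all of whose other entries are $0$. *)

theory Defs
  imports Main "HOL-Library.Product_Lexorder"
begin

text \<open>Entries of a generalised binary matrix. Matrices are functions
  nat => nat => entry together with dimensions m, n; rows are indexed by
  {0..<m} and columns by {0..<n} (0-based).\<close>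

datatype entry = Zero | One | Unk

text \<open>A submatrix is given by row index set I and column index set J.\<close>

definition gsupp :: "(nat \<Rightarrow> nat \<Rightarrow> entry) \<Rightarrow> nat set \<Rightarrow> nat set \<Rightarrow> (nat \<times> nat) set" where
  "gsupp Y I J = {(i, j). i \<in> I \<and> j \<in> J \<and> Y i j = One}"

definition is_rect :: "(nat \<Rightarrow> nat \<Rightarrow> entry) \<Rightarrow> nat set \<Rightarrow> nat set \<Rightarrow> nat set \<Rightarrow> nat set \<Rightarrow> bool" where
  "is_rect Y I J A B \<longleftrightarrow> A \<subseteq> I \<and> B \<subseteq> J \<and> (\<forall>i\<in>A. \<forall>j\<in>B. Y i j \<noteq> Zero)"

definition isolated :: "(nat \<Rightarrow> nat \<Rightarrow> entry) \<Rightarrow> nat set \<Rightarrow> nat set \<Rightarrow> (nat \<times> nat) set \<Rightarrow> bool" where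
  "isolated Y I J S \<longleftrightarrow> S \<subseteq> gsupp Y I J \<and>
     (\<forall>x\<in>S. \<forall>y\<in>S. x \<noteq> y \<longrightarrow> \<not> (\<exists>A B. is_rect Y I J A B \<and> x \<in> A \<times> B \<and> y \<in> A \<times> B))"

definition isol_num :: "(nat \<Rightarrow> nat \<Rightarrow> entry) \<Rightarrow> nat set \<Rightarrow> nat set \<Rightarrow> nat" where
  "isol_num Y I J = Max {card S | S. isolated Y I J S}"

definition br_num :: "(nat \<Rightarrow> nat \<Rightarrow> entry) \<Rightarrow> nat set \<Rightarrow> nat set \<Rightarrow> nat" where
  "br_num Y I J = (LEAST k. \<exists>F. finite F \<and> card F = k \<and>
      (\<forall>(A, B)\<in>F. is_rect Y I J A B) \<and> gsupp Y I J \<subseteq> (\<Union>(A, B)\<in>F. A \<times> B))"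

definition firm :: "(nat \<Rightarrow> nat \<Rightarrow> entry) \<Rightarrow> nat \<Rightarrow> nat \<Rightarrow> bool" where
  "firm Y m n \<longleftrightarrow> (\<forall>I J. I \<subseteq> {..<m} \<longrightarrow> J \<subseteq> {..<n} \<longrightarrow> isol_num Y I J = br_num Y I J)"

definition min_non_firm :: "(nat \<Rightarrow> nat \<Rightarrow> entry) \<Rightarrow> nat \<Rightarrow> nat \<Rightarrow> bool" where
  "min_non_firm Y m n \<longleftrightarrow> isol_num Y {..<m} {..<n} < br_num Y {..<m} {..<n} \<and>
     (\<forall>I J. I \<subseteq> {..<m} \<longrightarrow> J \<subseteq> {..<n} \<longrightarrow> (I \<noteq> {..<m} \<or> J \<noteq> {..<n}) \<longrightarrow>
        isol_num Y I J = br_num Y I J)"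

text \<open>Standard binary matrices are nat => nat => bool (True = 1).\<close>

definition bsupp :: "(nat \<Rightarrow> nat \<Rightarrow> bool) \<Rightarrow> nat \<Rightarrow> nat \<Rightarrow> (nat \<times> nat) set" where
  "bsupp X m n = {(i, j). i < m \<and> j < n \<and> X i j}"

text \<open>X^P: entries in P replaced by ?.\<close>

definition qmat :: "(nat \<Rightarrow> nat \<Rightarrow> bool) \<Rightarrow> (nat \<times> nat) set \<Rightarrow> nat \<Rightarrow> nat \<Rightarrow> entry" where
  "qmat X P i j = (if (i, j) \<in> P then Unk else if X i j then One else Zero)"

text \<open>Stretching S^Q(X), (m+q) x (n+q); the t-th (0-based) element of Q in
  lexicographic order is (fst (qs!t), snd (qs!t)).\<close>

definition stretch :: "(nat \<Rightarrow> nat \<Rightarrow> bool) \<Rightarrow> nat \<Rightarrow> nat \<Rightarrow> (nat \<times> nat) set \<Rightarrow> nat \<Rightarrow> nat \<Rightarrow> bool" where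
  "stretch X m n Q i j =
     (if i < m \<and> j < n then X i j
      else (let qs = sorted_list_of_set Q in
        \<exists>t < length qs. (i = fst (qs ! t) \<and> j = n + t) \<or> (i = m + t \<and> j = snd (qs ! t))
                         \<or> (i = m + t \<and> j = n + t)))"

end

theory Submission
  imports Defs
begin

text \<open>Let \<open>q = |Q|\<close> and \<open>Y = S\<^sup>Q(X)\<close>; the \<open>t\<close>-th element \<open>(\<ell>\<^sub>t, k\<^sub>t)\<close> of \<open>Q\<close> spans
  the all-ones block \<open>{\<ell>\<^sub>t, m + t} \<times> {k\<^sub>t, n + t}\<close> of \<open>Y\<close>.  An isolated set of \<open>Y\<close> meets
  each block at most once and is otherwise isolated in \<open>X\<^sup>Q\<close>, so \<open>i(Y) \<le> i(X\<^sup>Q) + q\<close>;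
  the diagonal ones \<open>(m + t, n + t)\<close> need \<open>q\<close> private rectangles, so
  \<open>br(Y) \<ge> br(X\<^sup>Q) + q\<close>, and \<open>i(Y) < br(Y)\<close> follows.

  A proper submatrix of \<open>Y\<close> reduces to a submatrix of \<open>X\<^sup>P\<close>, where \<open>P \<subseteq> Q\<close> consists of
  the ones whose new row and new column both survive.  If \<open>P = Q\<close> this submatrix of
  \<open>X\<^sup>Q\<close> is proper, otherwise \<open>X\<^sup>P\<close> is firm; either way \<open>i = br\<close> there.  A maximum
  isolated set and a minimum rectangle cover of it extend to the submatrix of \<open>Y\<close> by
  the same number of new points and new rectangles respectively, and \<open>i \<le> br\<close> always.\<close>

definition rect_linked :: "(nat \<Rightarrow> nat \<Rightarrow> entry) \<Rightarrow> nat \<times> nat \<Rightarrow> nat \<times> nat \<Rightarrow> bool" where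
  "rect_linked Y a b \<longleftrightarrow> Y (fst a) (snd b) \<noteq> Zero \<and> Y (fst b) (snd a) \<noteq> Zero"

lemma rect_linked_commute: "rect_linked Y a b \<longleftrightarrow> rect_linked Y b a"
  by (auto simp: rect_linked_def)

lemma isolated_iff_pairwise:
  "isolated Y I J S \<longleftrightarrow> S \<subseteq> gsupp Y I J \<and> pairwise (\<lambda>a b. \<not> rect_linked Y a b) S"
proof -
  have linked_iff: "(\<exists>A B. is_rect Y I J A B \<and> a \<in> A \<times> B \<and> b \<in> A \<times> B) \<longleftrightarrow> rect_linked Y a b"
    if "a \<in> gsupp Y I J" "b \<in> gsupp Y I J" for a b
  proof
    assume "\<exists>A B. is_rect Y I J A B \<and> a \<in> A \<times> B \<and> b \<in> A \<times> B"
    then show "rect_linked Y a b"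
      by (auto simp: is_rect_def rect_linked_def mem_Times_iff)
  next
    assume "rect_linked Y a b"
    with that have "is_rect Y I J {fst a, fst b} {snd a, snd b}"
      by (auto simp: is_rect_def rect_linked_def gsupp_def)
    then show "\<exists>A B. is_rect Y I J A B \<and> a \<in> A \<times> B \<and> b \<in> A \<times> B"
      by (auto simp: mem_Times_iff)
  qed
  show ?thesis
  proof (cases "S \<subseteq> gsupp Y I J")
    case True
    with linked_iff have "(\<exists>A B. is_rect Y I J A B \<and> a \<in> A \<times> B \<and> b \<in> A \<times> B) \<longleftrightarrow> rect_linked Y a b"
      if "a \<in> S" "b \<in> S" for a b
      using that by blast
    with True show ?thesis
      unfolding isolated_def pairwise_def Ball_def by simp
  next
    case False
    then show ?thesis by (simp add: isolated_def)
  qed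
qed

lemma pairwise_Un_symmetric:
  assumes "\<And>x y. R x y \<Longrightarrow> R y x"
  shows "pairwise R (A \<union> B) \<longleftrightarrow> pairwise R A \<and> pairwise R B \<and> (\<forall>a\<in>A. \<forall>b\<in>B. a \<noteq> b \<longrightarrow> R a b)"
proof
  assume "pairwise R (A \<union> B)"
  then show "pairwise R A \<and> pairwise R B \<and> (\<forall>a\<in>A. \<forall>b\<in>B. a \<noteq> b \<longrightarrow> R a b)"
    unfolding pairwise_def by blast
next
  assume H: "pairwise R A \<and> pairwise R B \<and> (\<forall>a\<in>A. \<forall>b\<in>B. a \<noteq> b \<longrightarrow> R a b)"
  show "pairwise R (A \<union> B)"
  proof (rule pairwiseI)
    fix x y assume xy: "x \<in> A \<union> B" "y \<in> A \<union> B" "x \<noteq> y"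
    have "R x y \<or> R y x"
      using xy(1,2)
    proof (elim UnE)
      assume "x \<in> A" "y \<in> A" with H xy(3) show ?thesis by (simp add: pairwise_def)
    next
      assume "x \<in> B" "y \<in> B" with H xy(3) show ?thesis by (simp add: pairwise_def)
    next
      assume "x \<in> A" "y \<in> B" with H xy(3) show ?thesis by simp
    next
      assume "x \<in> B" "y \<in> A" with H xy(3) show ?thesis by simp
    qed
    then show "R x y" using assms by blast
  qed
qed

lemma pairwise_unlinked_Un:
  "pairwise (\<lambda>a b. \<not> rect_linked Y a b) (A \<union> B) \<longleftrightarrow>
    pairwise (\<lambda>a b. \<not> rect_linked Y a b) A \<and> pairwise (\<lambda>a b. \<not> rect_linked Y a b) B \<and>
    (\<forall>a\<in>A. \<forall>b\<in>B. a \<noteq> b \<longrightarrow> \<not> rect_linked Y a b)"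
  by (rule pairwise_Un_symmetric) (simp add: rect_linked_commute)

lemma finite_gsupp: "finite I \<Longrightarrow> finite J \<Longrightarrow> finite (gsupp Y I J)"
  by (rule finite_subset[of _ "I \<times> J"]) (auto simp: gsupp_def)

lemma finite_isolated_cards: "finite I \<Longrightarrow> finite J \<Longrightarrow> finite {card S | S. isolated Y I J S}"
  by (rule finite_subset[of _ "card ` Pow (gsupp Y I J)"]) (auto simp: isolated_def finite_gsupp)

lemma card_le_isol_num: "finite I \<Longrightarrow> finite J \<Longrightarrow> isolated Y I J S \<Longrightarrow> card S \<le> isol_num Y I J"
  unfolding isol_num_def by (rule Max_ge[OF finite_isolated_cards]) auto

lemma obtain_max_isolated:
  assumes "finite I" "finite J"
  obtains S where "isolated Y I J S" "card S = isol_num Y I J"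
proof -
  have "isolated Y I J {}" by (simp add: isolated_def)
  then have "{card S | S. isolated Y I J S} \<noteq> {}" by blast
  from Max_in[OF finite_isolated_cards[OF assms] this] that show thesis
    unfolding isol_num_def by auto
qed

definition rect_cover :: "(nat \<Rightarrow> nat \<Rightarrow> entry) \<Rightarrow> nat set \<Rightarrow> nat set \<Rightarrow> (nat set \<times> nat set) set \<Rightarrow> bool" where
  "rect_cover Y I J F \<longleftrightarrow> finite F \<and> (\<forall>(A, B)\<in>F. is_rect Y I J A B) \<and> gsupp Y I J \<subseteq> (\<Union>(A, B)\<in>F. A \<times> B)"

lemma br_num_eq_Least_rect_cover: "br_num Y I J = (LEAST k. \<exists>F. rect_cover Y I J F \<and> card F = k)"
  unfolding br_num_def rect_cover_def by (simp only: conj_ac)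

lemma br_num_le_card: "rect_cover Y I J F \<Longrightarrow> br_num Y I J \<le> card F"
  unfolding br_num_eq_Least_rect_cover by (rule Least_le) blast

lemma obtain_min_rect_cover:
  assumes "finite I" "finite J"
  obtains F where "rect_cover Y I J F" "card F = br_num Y I J"
proof -
  let ?F = "(\<lambda>(i, j). ({i}, {j})) ` gsupp Y I J"
  have "\<forall>(A, B)\<in>?F. is_rect Y I J A B" by (auto simp: is_rect_def gsupp_def)
  moreover have "gsupp Y I J \<subseteq> (\<Union>(A, B)\<in>?F. A \<times> B)" by (auto simp: gsupp_def)
  ultimately have "rect_cover Y I J ?F" using finite_gsupp[OF assms] by (simp add: rect_cover_def)
  then have "\<exists>k F. rect_cover Y I J F \<and> card F = k" by blast
  then have "\<exists>F. rect_cover Y I J F \<and> card F = br_num Y I J"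
    unfolding br_num_eq_Least_rect_cover by (rule LeastI_ex)
  with that show thesis by blast
qed

lemma rect_coverD:
  assumes "rect_cover Y I J F"
  shows "finite F" and "(A, B) \<in> F \<Longrightarrow> is_rect Y I J A B"
    and "x \<in> gsupp Y I J \<Longrightarrow> \<exists>(A, B)\<in>F. x \<in> A \<times> B"
  using assms unfolding rect_cover_def by blast+

text \<open>Distinct points of an isolated set lie in distinct rectangles of any cover.\<close>

lemma isol_num_le_br_num:
  assumes "finite I" "finite J"
  shows "isol_num Y I J \<le> br_num Y I J"
proof -
  obtain S where S: "isolated Y I J S" "card S = isol_num Y I J"
    using obtain_max_isolated[OF assms] .
  obtain F where F: "rect_cover Y I J F" "card F = br_num Y I J"
    using obtain_min_rect_cover[OF assms] .
  have S_supp: "S \<subseteq> gsupp Y I J" and S_apart: "\<And>x z A B. x \<in> S \<Longrightarrow> z \<in> S \<Longrightarrow> x \<noteq> z \<Longrightarrow>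
      is_rect Y I J A B \<Longrightarrow> x \<in> A \<times> B \<Longrightarrow> z \<in> A \<times> B \<Longrightarrow> False"
    using S(1) unfolding isolated_def by blast+
  define rect_of where "rect_of x = (SOME p. p \<in> F \<and> x \<in> fst p \<times> snd p)" for x
  have rect_of: "rect_of x \<in> F \<and> x \<in> fst (rect_of x) \<times> snd (rect_of x)" if "x \<in> S" for x
  proof -
    have "\<exists>p. p \<in> F \<and> x \<in> fst p \<times> snd p"
      using rect_coverD(3)[OF F(1)] S_supp that by fastforce
    then show ?thesis unfolding rect_of_def by (rule someI_ex)
  qed
  have "inj_on rect_of S"
  proof (rule inj_onI, rule ccontr)
    fix x z assume xz: "x \<in> S" "z \<in> S" "rect_of x = rect_of z" "x \<noteq> z"
    have "is_rect Y I J (fst (rect_of x)) (snd (rect_of x))"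
      using rect_coverD(2)[OF F(1)] rect_of[OF xz(1)] by simp
    with rect_of[OF xz(1)] rect_of[OF xz(2)] xz show False
      using S_apart by metis
  qed
  moreover have "rect_of ` S \<subseteq> F" using rect_of by blast
  ultimately have "card S \<le> card F"
    using rect_coverD(1)[OF F(1)] by (rule card_inj_on_le)
  with S F show ?thesis by simp
qed

lemma qmat_empty_nonzero_iff [simp]: "qmat Z {} i j \<noteq> Zero \<longleftrightarrow> Z i j"
  and qmat_empty_eq_One_iff [simp]: "qmat Z {} i j = One \<longleftrightarrow> Z i j"
  by (auto simp: qmat_def)

lemma qmat_nonzero_iff: "P \<subseteq> bsupp X m n \<Longrightarrow> qmat X P i j \<noteq> Zero \<longleftrightarrow> X i j"
  by (auto simp: qmat_def bsupp_def)

lemma qmat_eq_One_iff: "qmat X P i j = One \<longleftrightarrow> X i j \<and> (i, j) \<notin> P"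
  by (auto simp: qmat_def)

lemma rect_linked_qmat_empty: "rect_linked (qmat Z {}) a b \<longleftrightarrow> Z (fst a) (snd b) \<and> Z (fst b) (snd a)"
  by (simp add: rect_linked_def)

locale stretching =
  fixes X :: "nat \<Rightarrow> nat \<Rightarrow> bool" and m n :: nat and Q :: "(nat \<times> nat) set"
  assumes Q_subset_supp: "Q \<subseteq> bsupp X m n"
begin

definition qrow :: "nat \<Rightarrow> nat" where "qrow t = fst (sorted_list_of_set Q ! t)"
definition qcol :: "nat \<Rightarrow> nat" where "qcol t = snd (sorted_list_of_set Q ! t)"

abbreviation Xs :: "nat \<Rightarrow> nat \<Rightarrow> bool" where "Xs \<equiv> stretch X m n Q"
abbreviation Ys :: "nat \<Rightarrow> nat \<Rightarrow> entry" where "Ys \<equiv> qmat Xs {}"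

lemma finite_Q: "finite Q"
  by (rule finite_subset[OF Q_subset_supp], rule finite_subset[of _ "{..<m} \<times> {..<n}"])
    (auto simp: bsupp_def)

lemma nth_sorted_Q: "sorted_list_of_set Q ! t = (qrow t, qcol t)"
  by (simp add: qrow_def qcol_def)

lemma Q_element: "t < card Q \<Longrightarrow> (qrow t, qcol t) \<in> Q"
  using finite_Q by (metis nth_sorted_Q length_sorted_list_of_set nth_mem set_sorted_list_of_set)

lemma Q_obtain_index:
  assumes "p \<in> Q"
  obtains t where "t < card Q" "p = (qrow t, qcol t)"
  using assms finite_Q by (metis in_set_conv_nth nth_sorted_Q length_sorted_list_of_set set_sorted_list_of_set)

lemma Q_index_inj: "t < card Q \<Longrightarrow> s < card Q \<Longrightarrow> (qrow t, qcol t) = (qrow s, qcol s) \<Longrightarrow> t = s"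
  by (metis nth_sorted_Q distinct_sorted_list_of_set length_sorted_list_of_set nth_eq_iff_index_eq)

lemma Q_entry: "t < card Q \<Longrightarrow> qrow t < m \<and> qcol t < n \<and> X (qrow t) (qcol t)"
  using Q_element Q_subset_supp by (auto simp: bsupp_def)

lemma stretch_old: "i < m \<Longrightarrow> j < n \<Longrightarrow> Xs i j = X i j"
  by (simp add: stretch_def)

lemma stretch_outside_old:
  "\<not> (i < m \<and> j < n) \<Longrightarrow> Xs i j \<longleftrightarrow>
    (\<exists>t < card Q. (i = qrow t \<and> j = n + t) \<or> (i = m + t \<and> j = qcol t) \<or> (i = m + t \<and> j = n + t))"
  unfolding stretch_def Let_def qrow_def qcol_def using finite_Q by auto

lemma stretch_new_col: "i < m \<Longrightarrow> t < card Q \<Longrightarrow> Xs i (n + t) \<longleftrightarrow> i = qrow t"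
  by (subst stretch_outside_old) auto

lemma stretch_new_row: "t < card Q \<Longrightarrow> j < n \<Longrightarrow> Xs (m + t) j \<longleftrightarrow> j = qcol t"
  using Q_entry by (subst stretch_outside_old) auto

lemma stretch_new_diag:
  assumes "t < card Q" "s < card Q"
  shows "Xs (m + t) (n + s) \<longleftrightarrow> s = t"
proof -
  have "m + t \<noteq> qrow u" "n + s \<noteq> qcol u" if "u < card Q" for u
    using Q_entry[OF that] by auto
  with assms show ?thesis by (subst stretch_outside_old) auto
qed

lemma stretch_block_ones:
  "t < card Q \<Longrightarrow> i \<in> {qrow t, m + t} \<Longrightarrow> j \<in> {qcol t, n + t} \<Longrightarrow> Xs i j"
  using Q_entry[of t] stretch_old stretch_new_col stretch_new_row stretch_new_diag by auto

lemma isol_num_stretch_le: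
  "isol_num Ys {..<m + card Q} {..<n + card Q} \<le> isol_num (qmat X Q) {..<m} {..<n} + card Q"
proof -
  let ?I = "{..<m + card Q}" and ?J = "{..<n + card Q}"
  obtain S where S: "isolated Ys ?I ?J S" "card S = isol_num Ys ?I ?J"
    using obtain_max_isolated[of ?I ?J] by blast
  have S_supp: "S \<subseteq> gsupp Ys ?I ?J" and S_apart: "pairwise (\<lambda>a b. \<not> rect_linked Ys a b) S"
    using S(1) by (simp_all add: isolated_iff_pairwise)
  have finite_S: "finite S"
    using S_supp finite_gsupp[of ?I ?J Ys] finite_subset by blast
  define old where "old = {p \<in> S. fst p < m \<and> snd p < n \<and> p \<notin> Q}"
  have "isolated (qmat X Q) {..<m} {..<n} old"
    unfolding isolated_iff_pairwise
  proof
    show "old \<subseteq> gsupp (qmat X Q) {..<m} {..<n}"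
      using S_supp by (auto simp: old_def gsupp_def qmat_eq_One_iff stretch_old)
    show "pairwise (\<lambda>a b. \<not> rect_linked (qmat X Q) a b) old"
    proof (rule pairwiseI)
      fix a b assume ab: "a \<in> old" "b \<in> old" "a \<noteq> b"
      then have "\<not> rect_linked Ys a b"
        using S_apart by (auto simp: old_def pairwise_def)
      with ab show "\<not> rect_linked (qmat X Q) a b"
        by (auto simp: old_def rect_linked_def qmat_nonzero_iff[OF Q_subset_supp] stretch_old)
    qed
  qed
  then have card_old: "card old \<le> isol_num (qmat X Q) {..<m} {..<n}"
    by (intro card_le_isol_num) auto
  define block where "block t = {qrow t, m + t} \<times> {qcol t, n + t}" for t
  have "S - old \<subseteq> (\<Union>t<card Q. S \<inter> block t)"
  proof
    fix p assume p: "p \<in> S - old"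
    obtain i j where p_ij: "p = (i, j)" by (cases p)
    have Xs_ij: "Xs i j" "i < m + card Q" "j < n + card Q"
      using p S_supp p_ij by (auto simp: gsupp_def)
    show "p \<in> (\<Union>t<card Q. S \<inter> block t)"
    proof (cases "p \<in> Q")
      case True
      then obtain t where "t < card Q" "p = (qrow t, qcol t)" by (rule Q_obtain_index)
      with p show ?thesis by (auto simp: block_def)
    next
      case False
      with p p_ij have "\<not> (i < m \<and> j < n)" by (auto simp: old_def)
      with Xs_ij(1) obtain t where "t < card Q"
        "(i = qrow t \<and> j = n + t) \<or> (i = m + t \<and> j = qcol t) \<or> (i = m + t \<and> j = n + t)"
        using stretch_outside_old by blast
      with p p_ij show ?thesis by (auto simp: block_def)
    qed
  qed
  then have "card (S - old) \<le> card (\<Union>t<card Q. S \<inter> block t)"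
    using finite_S by (intro card_mono) auto
  also have "\<dots> \<le> (\<Sum>t<card Q. card (S \<inter> block t))"
    by (rule card_UN_le) simp
  also have "\<dots> \<le> (\<Sum>t<card Q. 1)"
  proof (rule sum_mono)
    fix t assume t: "t \<in> {..<card Q}"
    have "a = b" if "a \<in> S \<inter> block t" "b \<in> S \<inter> block t" for a b
    proof (rule ccontr)
      assume "a \<noteq> b"
      moreover have "rect_linked Ys a b"
        using that t stretch_block_ones by (auto simp: block_def rect_linked_qmat_empty)
      ultimately show False
        using that S_apart by (auto simp: pairwise_def)
    qed
    then show "card (S \<inter> block t) \<le> 1"
      using finite_S by (simp add: card_le_Suc0_iff_eq)
  qed
  finally have "card (S - old) \<le> card Q" by simp
  moreover have "card S \<le> card old + card (S - old)"
    using card_Un_le[of old "S - old"] by (simp add: Un_absorb1 old_def)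
  ultimately show ?thesis
    using card_old S(2) by linarith
qed

lemma br_num_stretch_ge:
  "br_num (qmat X Q) {..<m} {..<n} + card Q \<le> br_num Ys {..<m + card Q} {..<n + card Q}"
proof -
  let ?I = "{..<m + card Q}" and ?J = "{..<n + card Q}"
  obtain F where F: "rect_cover Ys ?I ?J F" "card F = br_num Ys ?I ?J"
    using obtain_min_rect_cover[of ?I ?J] by blast
  have in_rect: "Xs i j" if "p \<in> F" "i \<in> fst p" "j \<in> snd p" for p i j
    using that rect_coverD(2)[OF F(1), of "fst p" "snd p"] by (simp add: is_rect_def)
  have covered: "\<exists>p\<in>F. x \<in> fst p \<times> snd p" if "x \<in> gsupp Ys ?I ?J" for x
    using rect_coverD(3)[OF F(1) that] by force
  define diag_rect where "diag_rect t = (SOME p. p \<in> F \<and> (m + t, n + t) \<in> fst p \<times> snd p)" for t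
  have diag_rect: "diag_rect t \<in> F \<and> (m + t, n + t) \<in> fst (diag_rect t) \<times> snd (diag_rect t)"
    if "t < card Q" for t
  proof -
    have "(m + t, n + t) \<in> gsupp Ys ?I ?J"
      using that stretch_new_diag[OF that that] by (simp add: gsupp_def)
    from covered[OF this] show ?thesis
      unfolding diag_rect_def by (rule someI_ex[OF bexE]) blast
  qed
  have inj: "inj_on diag_rect {..<card Q}"
  proof (rule inj_onI)
    fix t s assume ts: "t \<in> {..<card Q}" "s \<in> {..<card Q}" "diag_rect t = diag_rect s"
    then have "Xs (m + t) (n + s)"
      using in_rect[of "diag_rect t" "m + t" "n + s"] diag_rect[of t] diag_rect[of s] by auto
    with ts show "t = s" using stretch_new_diag by auto
  qed
  have diag_in_F: "diag_rect ` {..<card Q} \<subseteq> F" using diag_rect by auto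
  have finite_F: "finite F" by (rule rect_coverD(1)[OF F(1)])
  define rest where "rest = (\<lambda>p. (fst p \<inter> {..<m}, snd p \<inter> {..<n})) ` (F - diag_rect ` {..<card Q})"
  have "rect_cover (qmat X Q) {..<m} {..<n} rest"
    unfolding rect_cover_def
  proof (intro conjI)
    show "finite rest" using finite_F by (simp add: rest_def)
    show "\<forall>(A, B)\<in>rest. is_rect (qmat X Q) {..<m} {..<n} A B"
      using in_rect stretch_old
      by (fastforce simp: rest_def is_rect_def qmat_nonzero_iff[OF Q_subset_supp])
    show "gsupp (qmat X Q) {..<m} {..<n} \<subseteq> (\<Union>(A, B)\<in>rest. A \<times> B)"
    proof
      fix x assume x: "x \<in> gsupp (qmat X Q) {..<m} {..<n}"
      obtain i j where x_ij: "x = (i, j)" by (cases x)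
      have ij: "i < m" "j < n" "X i j" "(i, j) \<notin> Q"
        using x x_ij by (auto simp: gsupp_def qmat_eq_One_iff)
      then have "x \<in> gsupp Ys ?I ?J" using x_ij stretch_old by (simp add: gsupp_def)
      then obtain p where p: "p \<in> F" "x \<in> fst p \<times> snd p" using covered by blast
      have "p \<notin> diag_rect ` {..<card Q}"
      proof
        assume "p \<in> diag_rect ` {..<card Q}"
        then obtain t where t: "t < card Q" "p = diag_rect t" by auto
        have "Xs i (n + t)" "Xs (m + t) j"
          using in_rect[of p] p x_ij diag_rect[OF t(1)] t(2) by auto
        then have "(i, j) = (qrow t, qcol t)"
          using ij t(1) stretch_new_col stretch_new_row by simp
        with Q_element[OF t(1)] ij(4) show False by simp
      qed
      with p x_ij ij show "x \<in> (\<Union>(A, B)\<in>rest. A \<times> B)"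
        unfolding rest_def by force
    qed
  qed
  then have "br_num (qmat X Q) {..<m} {..<n} \<le> card rest" by (rule br_num_le_card)
  also have "\<dots> \<le> card (F - diag_rect ` {..<card Q})"
    unfolding rest_def by (rule card_image_le) (simp add: finite_F)
  also have "\<dots> = card F - card Q"
    using card_Diff_subset[OF finite_subset[OF diag_in_F finite_F] diag_in_F] card_image[OF inj] by simp
  finally show ?thesis
    using card_mono[OF finite_F diag_in_F] card_image[OF inj] F(2) by simp
qed

end

text \<open>In a submatrix \<open>I \<times> J\<close> of the stretched matrix, a one \<open>(qrow t, qcol t)\<close> whose
  new row and new column both survive lies in the all-ones \<open>2 \<times> 2\<close> block
  \<open>{qrow t, m + t} \<times> {qcol t, n + t}\<close> and may be masked.  If only the new row \<open>m + t\<close>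
  survives, its single one \<open>(m + t, qcol t)\<close> serves the old column \<open>qcol t\<close>, which
  can then be covered by one rectangle and is removed from the core (dually for columns).\<close>

locale stretched_submatrix = stretching +
  fixes I J :: "nat set"
  assumes rows_subset: "I \<subseteq> {..<m + card Q}" and cols_subset: "J \<subseteq> {..<n + card Q}"
begin

definition both_kept :: "nat set" where
  "both_kept = {t. t < card Q \<and> m + t \<in> I \<and> n + t \<in> J}"

definition row_kept :: "nat set" where
  "row_kept = {t. t < card Q \<and> m + t \<in> I \<and> n + t \<notin> J \<and> qcol t \<in> J}"

definition col_kept :: "nat set" where
  "col_kept = {t. t < card Q \<and> n + t \<in> J \<and> m + t \<notin> I \<and> qrow t \<in> I}"

definition served_cols :: "nat set" where "served_cols = qcol ` row_kept"
definition served_rows :: "nat set" where "served_rows = qrow ` col_kept"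

definition masked :: "(nat \<times> nat) set" where "masked = (\<lambda>t. (qrow t, qcol t)) ` both_kept"

definition core_rows :: "nat set" where "core_rows = I \<inter> {..<m} - served_rows"
definition core_cols :: "nat set" where "core_cols = J \<inter> {..<n} - served_cols"

abbreviation core :: "nat \<Rightarrow> nat \<Rightarrow> entry" where "core \<equiv> qmat X masked"

abbreviation extra :: nat where "extra \<equiv> card both_kept + card served_cols + card served_rows"

lemma finite_kept: "finite both_kept" "finite row_kept" "finite col_kept"
  by (simp_all add: both_kept_def row_kept_def col_kept_def)

lemma masked_subset_Q: "masked \<subseteq> Q"
  using Q_element by (auto simp: masked_def both_kept_def)

lemma core_subset: "core_rows \<subseteq> {..<m}" "core_cols \<subseteq> {..<n}" "core_rows \<subseteq> I" "core_cols \<subseteq> J"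
  by (auto simp: core_rows_def core_cols_def)

lemma served_cols_subset: "served_cols \<subseteq> J \<inter> {..<n}"
  using Q_entry by (auto simp: served_cols_def row_kept_def)

lemma served_rows_subset: "served_rows \<subseteq> I \<inter> {..<m}"
  using Q_entry by (auto simp: served_rows_def col_kept_def)

lemma masked_eq_Q_imp_core_proper:
  assumes "masked = Q" and "I \<noteq> {..<m + card Q} \<or> J \<noteq> {..<n + card Q}"
  shows "core_rows \<noteq> {..<m} \<or> core_cols \<noteq> {..<n}"
proof -
  have all_kept: "both_kept = {..<card Q}"
  proof
    show "{..<card Q} \<subseteq> both_kept"
    proof
      fix t assume t: "t \<in> {..<card Q}"
      with Q_element assms(1) obtain s where "s \<in> both_kept" "(qrow t, qcol t) = (qrow s, qcol s)"
        by (force simp: masked_def)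
      with t Q_index_inj show "t \<in> both_kept" by (auto simp: both_kept_def)
    qed
  qed (auto simp: both_kept_def)
  then have "served_cols = {}" "served_rows = {}"
    by (auto simp: served_cols_def served_rows_def row_kept_def col_kept_def both_kept_def)
  then have "core_rows = I \<inter> {..<m}" "core_cols = J \<inter> {..<n}"
    by (simp_all add: core_rows_def core_cols_def)
  moreover have "m + t \<in> I" "n + t \<in> J" if "t < card Q" for t
    using all_kept that by (auto simp: both_kept_def)
  then have "{..<m + card Q} - {..<m} \<subseteq> I" "{..<n + card Q} - {..<n} \<subseteq> J"
    by (metis DiffE add_diff_inverse_nat lessThan_iff nat_add_left_cancel_less subsetI)+
  ultimately show ?thesis
    using assms(2) rows_subset cols_subset by blast
qed

definition row_witness :: "nat \<Rightarrow> nat" where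
  "row_witness c = (SOME t. t \<in> row_kept \<and> qcol t = c)"

definition col_witness :: "nat \<Rightarrow> nat" where
  "col_witness r = (SOME t. t \<in> col_kept \<and> qrow t = r)"

lemma row_witness: "c \<in> served_cols \<Longrightarrow> row_witness c \<in> row_kept \<and> qcol (row_witness c) = c"
  unfolding row_witness_def served_cols_def by (rule someI_ex) blast

lemma col_witness: "r \<in> served_rows \<Longrightarrow> col_witness r \<in> col_kept \<and> qrow (col_witness r) = r"
  unfolding col_witness_def served_rows_def by (rule someI_ex) blast

definition diag_points :: "(nat \<times> nat) set" where
  "diag_points = (\<lambda>t. (m + t, n + t)) ` both_kept"

definition row_points :: "(nat \<times> nat) set" where
  "row_points = (\<lambda>c. (m + row_witness c, c)) ` served_cols"

definition col_points :: "(nat \<times> nat) set" where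
  "col_points = (\<lambda>r. (r, n + col_witness r)) ` served_rows"

lemma diag_points_apart: "pairwise (\<lambda>a b. \<not> rect_linked Ys a b) diag_points"
  using stretch_new_diag
  by (auto simp: pairwise_def diag_points_def both_kept_def rect_linked_qmat_empty)

lemma row_points_apart: "pairwise (\<lambda>a b. \<not> rect_linked Ys a b) row_points"
proof (rule pairwiseI)
  fix a b assume "a \<in> row_points" "b \<in> row_points" "a \<noteq> b"
  then obtain c d where cd: "c \<in> served_cols" "d \<in> served_cols" "c \<noteq> d"
    "a = (m + row_witness c, c)" "b = (m + row_witness d, d)"
    by (auto simp: row_points_def)
  have "d < n" using cd(2) served_cols_subset by auto
  with cd row_witness[OF cd(1)] stretch_new_row[of "row_witness c" d]
  show "\<not> rect_linked Ys a b"
    by (auto simp: rect_linked_qmat_empty row_kept_def)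
qed

lemma col_points_apart: "pairwise (\<lambda>a b. \<not> rect_linked Ys a b) col_points"
proof (rule pairwiseI)
  fix a b assume "a \<in> col_points" "b \<in> col_points" "a \<noteq> b"
  then obtain r s where rs: "r \<in> served_rows" "s \<in> served_rows" "r \<noteq> s"
    "a = (r, n + col_witness r)" "b = (s, n + col_witness s)"
    by (auto simp: col_points_def)
  have "s < m" using rs(2) served_rows_subset by auto
  with rs col_witness[OF rs(1)] stretch_new_col[of s "col_witness r"]
  show "\<not> rect_linked Ys a b"
    by (auto simp: rect_linked_qmat_empty col_kept_def)
qed

lemma diag_row_points_apart: "a \<in> diag_points \<Longrightarrow> b \<in> row_points \<Longrightarrow> \<not> rect_linked Ys a b"
  using row_witness stretch_new_diag
  by (fastforce simp: diag_points_def row_points_def both_kept_def row_kept_def rect_linked_qmat_empty)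

lemma diag_col_points_apart: "a \<in> diag_points \<Longrightarrow> b \<in> col_points \<Longrightarrow> \<not> rect_linked Ys a b"
  using col_witness stretch_new_diag
  by (fastforce simp: diag_points_def col_points_def both_kept_def col_kept_def rect_linked_qmat_empty)

lemma row_col_points_apart: "a \<in> row_points \<Longrightarrow> b \<in> col_points \<Longrightarrow> \<not> rect_linked Ys a b"
  using row_witness col_witness stretch_new_diag
  by (fastforce simp: row_points_def col_points_def row_kept_def col_kept_def rect_linked_qmat_empty)

definition new_points :: "(nat \<times> nat) set" where
  "new_points = diag_points \<union> row_points \<union> col_points"

lemma new_points_apart: "pairwise (\<lambda>a b. \<not> rect_linked Ys a b) new_points"
  unfolding new_points_def pairwise_unlinked_Un
proof (intro conjI ballI impI)
  fix a b assume "a \<in> diag_points \<union> row_points" "b \<in> col_points"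
  then show "\<not> rect_linked Ys a b"
    using diag_col_points_apart row_col_points_apart by blast
qed (simp_all add: diag_points_apart row_points_apart col_points_apart diag_row_points_apart)

lemma new_points_subset_gsupp: "new_points \<subseteq> gsupp Ys I J"
proof -
  have "diag_points \<subseteq> gsupp Ys I J"
    by (auto simp: diag_points_def both_kept_def gsupp_def stretch_new_diag)
  moreover have "(m + row_witness c, c) \<in> gsupp Ys I J" if "c \<in> served_cols" for c
  proof -
    have "row_witness c \<in> row_kept" "qcol (row_witness c) = c" "c < n"
      using row_witness[OF that] served_cols_subset that by auto
    then show ?thesis by (simp add: row_kept_def gsupp_def stretch_new_row)
  qed
  moreover have "(r, n + col_witness r) \<in> gsupp Ys I J" if "r \<in> served_rows" for r
  proof -
    have "col_witness r \<in> col_kept" "qrow (col_witness r) = r" "r < m"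
      using col_witness[OF that] served_rows_subset that by auto
    then show ?thesis by (simp add: col_kept_def gsupp_def stretch_new_col)
  qed
  ultimately show ?thesis
    by (auto simp: new_points_def row_points_def col_points_def)
qed

lemma core_new_points_apart:
  assumes a: "a \<in> gsupp core core_rows core_cols" and b: "b \<in> new_points"
  shows "\<not> rect_linked Ys a b"
proof
  assume linked: "rect_linked Ys a b"
  obtain i j where a_ij: "a = (i, j)" by (cases a)
  from a a_ij have ij: "i < m" "j < n" "i \<notin> served_rows" "j \<notin> served_cols" "(i, j) \<notin> masked"
    using core_subset by (auto simp: gsupp_def qmat_eq_One_iff core_rows_def core_cols_def)
  consider (diag) t where "t \<in> both_kept" "b = (m + t, n + t)"
    | (row) c where "c \<in> served_cols" "b = (m + row_witness c, c)"
    | (col) r where "r \<in> served_rows" "b = (r, n + col_witness r)"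
    using b by (auto simp: new_points_def diag_points_def row_points_def col_points_def)
  then show False
  proof cases
    case diag
    with linked a_ij ij have "(i, j) = (qrow t, qcol t)"
      using stretch_new_col stretch_new_row by (auto simp: both_kept_def rect_linked_qmat_empty)
    with diag ij show False by (auto simp: masked_def)
  next
    case row
    with linked a_ij ij row_witness[OF row(1)] show False
      using stretch_new_row by (auto simp: row_kept_def rect_linked_qmat_empty)
  next
    case col
    with linked a_ij ij col_witness[OF col(1)] show False
      using stretch_new_col by (auto simp: col_kept_def rect_linked_qmat_empty)
  qed
qed

lemma card_new_points: "finite new_points \<and> card new_points = extra"
proof -
  have "inj_on (\<lambda>t. (m + t, n + t)) both_kept" "inj_on (\<lambda>c. (m + row_witness c, c)) served_cols"
    "inj_on (\<lambda>r. (r, n + col_witness r)) served_rows"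
    by (auto intro: inj_onI)
  then have cards: "card diag_points = card both_kept" "card row_points = card served_cols"
    "card col_points = card served_rows"
    unfolding diag_points_def row_points_def col_points_def by (simp_all add: card_image)
  have finite: "finite diag_points" "finite row_points" "finite col_points"
    using finite_kept by (simp_all add: diag_points_def row_points_def col_points_def
        served_cols_def served_rows_def)
  have "n \<le> snd p" if "p \<in> diag_points" for p
    using that by (auto simp: diag_points_def)
  moreover have "snd p < n" if "p \<in> row_points" for p
    using that served_cols_subset by (auto simp: row_points_def)
  moreover have "m \<le> fst p" if "p \<in> diag_points \<union> row_points" for p
    using that by (auto simp: diag_points_def row_points_def)
  moreover have "fst p < m" if "p \<in> col_points" for p
    using that served_rows_subset by (auto simp: col_points_def)
  ultimately have "diag_points \<inter> row_points = {}" "(diag_points \<union> row_points) \<inter> col_points = {}"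
    by (meson disjoint_iff not_le)+
  with finite cards show ?thesis
    by (simp add: new_points_def card_Un_disjoint)
qed

lemma new_points_outside_old: "p \<in> new_points \<Longrightarrow> \<not> (fst p < m \<and> snd p < n)"
  by (auto simp: new_points_def diag_points_def row_points_def col_points_def)

lemma isol_num_core_le: "isol_num core core_rows core_cols + extra \<le> isol_num Ys I J"
proof -
  have finite_core: "finite core_rows" "finite core_cols"
    using core_subset finite_subset by blast+
  obtain S where S: "isolated core core_rows core_cols S" "card S = isol_num core core_rows core_cols"
    using obtain_max_isolated[OF finite_core] by blast
  have S_supp: "S \<subseteq> gsupp core core_rows core_cols"
    and S_apart: "pairwise (\<lambda>a b. \<not> rect_linked core a b) S"
    using S(1) by (simp_all add: isolated_iff_pairwise)
  have S_old: "fst a < m" "snd a < n" if "a \<in> S" for a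
    using that S_supp core_subset by (force simp: gsupp_def)+
  have S_in_Ys: "S \<subseteq> gsupp Ys I J"
  proof
    fix a assume "a \<in> S"
    with S_supp core_subset S_old[OF this] show "a \<in> gsupp Ys I J"
      by (auto simp: gsupp_def qmat_eq_One_iff stretch_old)
  qed
  have "pairwise (\<lambda>a b. \<not> rect_linked Ys a b) S"
  proof (rule pairwiseI)
    fix a b assume ab: "a \<in> S" "b \<in> S" "a \<noteq> b"
    with S_apart have "\<not> rect_linked core a b" by (simp add: pairwise_def)
    moreover note S_old[OF ab(1)] S_old[OF ab(2)]
    ultimately show "\<not> rect_linked Ys a b"
      using masked_subset_Q Q_subset_supp
      by (simp add: rect_linked_def stretch_old qmat_nonzero_iff[of masked X m n])
  qed
  moreover have "\<forall>a\<in>S. \<forall>b\<in>new_points. a \<noteq> b \<longrightarrow> \<not> rect_linked Ys a b"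
    using S_supp core_new_points_apart by blast
  ultimately have "isolated Ys I J (S \<union> new_points)"
    using new_points_apart new_points_subset_gsupp S_in_Ys
    by (simp add: isolated_iff_pairwise pairwise_unlinked_Un)
  then have "card (S \<union> new_points) \<le> isol_num Ys I J"
    using rows_subset cols_subset finite_subset by (intro card_le_isol_num) auto
  moreover have "S \<inter> new_points = {}"
    using S_old new_points_outside_old by blast
  moreover have "finite S"
    using S_supp finite_gsupp[OF finite_core] by (rule finite_subset)
  ultimately show ?thesis
    using card_new_points S(2) by (simp add: card_Un_disjoint)
qed

lemma submatrix_one_cases:
  assumes "(i, j) \<in> gsupp Ys I J"
  shows "i \<in> served_rows \<or> j \<in> served_cols \<or>
    (\<exists>t\<in>both_kept. i \<in> {qrow t, m + t} \<and> j \<in> {qcol t, n + t}) \<or>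
    (i, j) \<in> gsupp core core_rows core_cols"
proof -
  have ij: "i \<in> I" "j \<in> J" "Xs i j" using assms by (auto simp: gsupp_def)
  then have bounds: "i < m + card Q" "j < n + card Q" using rows_subset cols_subset by auto
  consider (old) "i < m" "j < n" | (new_col) "i < m" "\<not> j < n" | (new_row) "\<not> i < m" "j < n"
    | (new_both) "\<not> i < m" "\<not> j < n" by blast
  then show ?thesis
  proof cases
    case old
    show ?thesis
    proof (cases "i \<in> served_rows \<or> j \<in> served_cols \<or> (i, j) \<in> masked")
      case True
      then show ?thesis by (auto simp: masked_def)
    next
      case False
      with old ij show ?thesis
        by (auto simp: gsupp_def core_rows_def core_cols_def qmat_eq_One_iff stretch_old)
    qed
  next
    case new_col
    define t where "t = j - n"
    with new_col bounds have t: "t < card Q" "j = n + t" by auto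
    with new_col ij have "i = qrow t" using stretch_new_col by simp
    with t ij show ?thesis
      by (cases "m + t \<in> I") (auto simp: both_kept_def served_rows_def col_kept_def)
  next
    case new_row
    define t where "t = i - m"
    with new_row bounds have t: "t < card Q" "i = m + t" by auto
    with new_row ij have "j = qcol t" using stretch_new_row by simp
    with t ij show ?thesis
      by (cases "n + t \<in> J") (auto simp: both_kept_def served_cols_def row_kept_def)
  next
    case new_both
    define t where "t = i - m"
    define s where "s = j - n"
    with t_def new_both bounds have ts: "t < card Q" "i = m + t" "s < card Q" "j = n + s" by auto
    with ij have "s = t" using stretch_new_diag by simp
    with ts ij show ?thesis by (auto simp: both_kept_def)
  qed
qed

lemma br_num_le_core: "br_num Ys I J \<le> br_num core core_rows core_cols + extra"
proof -
  have finite_core: "finite core_rows" "finite core_cols"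
    using core_subset finite_subset by blast+
  obtain F where F: "rect_cover core core_rows core_cols F" "card F = br_num core core_rows core_cols"
    using obtain_min_rect_cover[OF finite_core] by blast
  define block where "block t = ({qrow t, m + t} \<inter> I, {qcol t, n + t} \<inter> J)" for t
  define col_rect where "col_rect c = ({i \<in> I. Xs i c}, {c})" for c
  define row_rect where "row_rect r = ({r}, {j \<in> J. Xs r j})" for r
  define F' where "F' = F \<union> block ` both_kept \<union> col_rect ` served_cols \<union> row_rect ` served_rows"
  have "rect_cover Ys I J F'"
    unfolding rect_cover_def
  proof (intro conjI)
    show "finite F'"
      using rect_coverD(1)[OF F(1)] finite_kept
      by (simp add: F'_def served_cols_def served_rows_def)
    have "is_rect Ys I J A B" if "(A, B) \<in> F" for A B
    proof -
      have "is_rect core core_rows core_cols A B" by (rule rect_coverD(2)[OF F(1) that])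
      with core_subset masked_subset_Q Q_subset_supp show ?thesis
        by (fastforce simp: is_rect_def stretch_old qmat_nonzero_iff[of masked X m n])
    qed
    moreover have "is_rect Ys I J A B" if "(A, B) \<in> block ` both_kept" for A B
      using that stretch_block_ones by (auto simp: block_def both_kept_def is_rect_def)
    moreover have "is_rect Ys I J A B" if "(A, B) \<in> col_rect ` served_cols" for A B
      using that served_cols_subset by (auto simp: col_rect_def is_rect_def)
    moreover have "is_rect Ys I J A B" if "(A, B) \<in> row_rect ` served_rows" for A B
      using that served_rows_subset by (auto simp: row_rect_def is_rect_def)
    ultimately show "\<forall>(A, B)\<in>F'. is_rect Ys I J A B"
      unfolding F'_def by blast
    show "gsupp Ys I J \<subseteq> (\<Union>(A, B)\<in>F'. A \<times> B)"
    proof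
      fix x assume x: "x \<in> gsupp Ys I J"
      obtain i j where x_ij: "x = (i, j)" by (cases x)
      have ij: "i \<in> I" "j \<in> J" "Xs i j" using x x_ij by (auto simp: gsupp_def)
      from submatrix_one_cases[OF x[unfolded x_ij]]
      consider "i \<in> served_rows" | "j \<in> served_cols"
        | t where "t \<in> both_kept" "i \<in> {qrow t, m + t}" "j \<in> {qcol t, n + t}"
        | "(i, j) \<in> gsupp core core_rows core_cols" by blast
      then show "x \<in> (\<Union>(A, B)\<in>F'. A \<times> B)"
      proof cases
        case 1
        with ij x_ij show ?thesis by (force simp: F'_def row_rect_def)
      next
        case 2
        with ij x_ij show ?thesis by (force simp: F'_def col_rect_def)
      next
        case 3
        with ij x_ij show ?thesis by (force simp: F'_def block_def)
      next
        case 4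
        then obtain A B where "(A, B) \<in> F" "(i, j) \<in> A \<times> B"
          using rect_coverD(3)[OF F(1)] by blast
        with x_ij show ?thesis by (force simp: F'_def)
      qed
    qed
  qed
  then have "br_num Ys I J \<le> card F'" by (rule br_num_le_card)
  also have "\<dots> \<le> card F + card (block ` both_kept) + card (col_rect ` served_cols) + card (row_rect ` served_rows)"
    unfolding F'_def by (meson add_le_mono card_Un_le le_refl order_trans)
  also have "\<dots> \<le> card F + extra"
    using card_image_le[OF finite_kept(1), of block]
      card_image_le[of served_cols col_rect] card_image_le[of served_rows row_rect] finite_kept
    by (simp add: served_cols_def served_rows_def)
  finally show ?thesis using F(2) by simp
qed

lemma isol_num_eq_br_num:
  assumes "min_non_firm (qmat X Q) m n" and "\<forall>P. P \<subset> Q \<longrightarrow> firm (qmat X P) m n"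
    and "I \<noteq> {..<m + card Q} \<or> J \<noteq> {..<n + card Q}"
  shows "isol_num Ys I J = br_num Ys I J"
proof -
  have "isol_num core core_rows core_cols = br_num core core_rows core_cols"
  proof (cases "masked = Q")
    case True
    with assms(1,3) show ?thesis
      using masked_eq_Q_imp_core_proper core_subset by (simp add: min_non_firm_def)
  next
    case False
    with masked_subset_Q assms(2) have "firm core m n" by blast
    with core_subset show ?thesis by (simp add: firm_def)
  qed
  moreover have "isol_num Ys I J \<le> br_num Ys I J"
    using rows_subset cols_subset finite_subset by (intro isol_num_le_br_num) auto
  ultimately show ?thesis
    using isol_num_core_le br_num_le_core by linarith
qed

end

theorem theorem3:
  fixes X :: "nat \<Rightarrow> nat \<Rightarrow> bool" and m n :: nat and Q :: "(nat \<times> nat) set"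
  assumes "Q \<noteq> {}" and "Q \<subset> bsupp X m n"
    and "min_non_firm (qmat X Q) m n"
    and "\<forall>P. P \<subset> Q \<longrightarrow> firm (qmat X P) m n"
  shows "min_non_firm (qmat (stretch X m n Q) {}) (m + card Q) (n + card Q)"
proof -
  interpret stretching X m n Q
    using assms(2) by unfold_locales blast
  have "isol_num (qmat X Q) {..<m} {..<n} < br_num (qmat X Q) {..<m} {..<n}"
    using assms(3) by (simp add: min_non_firm_def)
  then have "isol_num Ys {..<m + card Q} {..<n + card Q} < br_num Ys {..<m + card Q} {..<n + card Q}"
    using isol_num_stretch_le br_num_stretch_ge by linarith
  moreover have "isol_num Ys I J = br_num Ys I J"
    if "I \<subseteq> {..<m + card Q}" "J \<subseteq> {..<n + card Q}" "I \<noteq> {..<m + card Q} \<or> J \<noteq> {..<n + card Q}"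
    for I J
  proof -
    interpret stretched_submatrix X m n Q I J
      using that(1,2) by unfold_locales
    show ?thesis using assms(3,4) that(3) by (rule isol_num_eq_br_num)
  qed
  ultimately show ?thesis
    by (simp add: min_non_firm_def)
qed

end
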